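(* A Banach $f$-algebra $E$ is $mw$-continuous if and only if, for every net $(x_\alpha)$ in $E$, $x_\alpha\downarrow0$ implies $x_\alpha\xrightarrow{mw}0$.
   Context: All vector lattices are real and Archimedean. An $f$-algebra is a vector lattice with an associative multiplication making it an algebra, such that products of positive elements are positive and $x\wedge y=0$ implies $(xz)\wedge y=(zx)\wedge y=0$ for all $z\ge0$. A Banach $f$-algebra is an $f$-algebra which is a Banach lattice with $\|xy\|\le\|x\|\|y\|$. A net $(x_\alpha)$ in $E$ $mw$-converges to $x$ ($x_\alpha\xrightarrow{mw}x$) if $|x_\alpha-x|u\to0$ weakly for every $u\in E_+$. A net $(x_\alpha)$ order converges to $x$ ($x_\alpha\xrightarrow{o}x$) if there is a net $y_\beta\downarrow0$ such that for every $\beta$ there is $\alpha_0$ with $|x_\alpha-x|\le y_\beta$ for all $\alpha\ge\alpha_0$. $E$ is called $mw$-continuous if $x_\alpha\xrightarrow{o}0$ implies $x_\alpha\xrightarrow{mw}0$. *)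

theory Defs
  imports "HOL-Analysis.Analysis"
begin

definition lat_abs :: "'a::{lattice, ab_group_add} \<Rightarrow> 'a" where
  "lat_abs x = sup x (- x)"

text \<open>The ambient type class provides: a real vector space with a
  compatible partial order that is a lattice (a vector lattice), an associative
  bilinear multiplication with submultiplicative norm, and completeness of the norm.
  The predicate adds: Archimedean property, positivity of products of positives,
  the f-algebra condition, and the Banach lattice norm condition.\<close>
definition banach_f_algebra ::
  "'a::{real_normed_algebra, banach, lattice, ordered_real_vector} itself \<Rightarrow> bool" where
  "banach_f_algebra _ \<longleftrightarrow>
     (\<forall>x y::'a. 0 \<le> x \<and> (\<forall>n::nat. of_nat n *\<^sub>R x \<le> y) \<longrightarrow> x = 0) \<and>
     (\<forall>x y::'a. 0 \<le> x \<and> 0 \<le> y \<longrightarrow> 0 \<le> x * y) \<and>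
     (\<forall>x y z::'a. inf x y = 0 \<and> 0 \<le> z \<longrightarrow> inf (x * z) y = 0 \<and> inf (z * x) y = 0) \<and>
     (\<forall>x y::'a. lat_abs x \<le> lat_abs y \<longrightarrow> norm x \<le> norm y)"

text \<open>A net is given by a nonempty index set I with a directed preorder r on I,
  together with a map x from indices to E.\<close>
definition directed_on :: "'i set \<Rightarrow> ('i \<Rightarrow> 'i \<Rightarrow> bool) \<Rightarrow> bool" where
  "directed_on I r \<longleftrightarrow> I \<noteq> {} \<and> (\<forall>a\<in>I. r a a) \<and>
     (\<forall>a\<in>I. \<forall>b\<in>I. \<forall>c\<in>I. r a b \<and> r b c \<longrightarrow> r a c) \<and>
     (\<forall>a\<in>I. \<forall>b\<in>I. \<exists>c\<in>I. r a c \<and> r b c)"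

definition net_eventually :: "'i set \<Rightarrow> ('i \<Rightarrow> 'i \<Rightarrow> bool) \<Rightarrow> ('i \<Rightarrow> bool) \<Rightarrow> bool" where
  "net_eventually I r P \<longleftrightarrow> (\<exists>a0\<in>I. \<forall>a\<in>I. r a0 a \<longrightarrow> P a)"

definition net_decr_to_zero :: "'i set \<Rightarrow> ('i \<Rightarrow> 'i \<Rightarrow> bool) \<Rightarrow> ('i \<Rightarrow> 'a::{lattice, zero}) \<Rightarrow> bool" where
  "net_decr_to_zero I r x \<longleftrightarrow>
     (\<forall>a\<in>I. \<forall>b\<in>I. r a b \<longrightarrow> x b \<le> x a) \<and>
     (\<forall>a\<in>I. 0 \<le> x a) \<and> (\<forall>z. (\<forall>a\<in>I. z \<le> x a) \<longrightarrow> z \<le> 0)"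

definition order_conv :: "'i set \<Rightarrow> ('i \<Rightarrow> 'i \<Rightarrow> bool) \<Rightarrow> ('i \<Rightarrow> 'a::{lattice, ab_group_add}) \<Rightarrow> 'a \<Rightarrow> bool" where
  "order_conv I r x l \<longleftrightarrow>
     (\<exists>(J::'i set) s y. directed_on J s \<and> net_decr_to_zero J s y \<and>
        (\<forall>b\<in>J. net_eventually I r (\<lambda>a. lat_abs (x a - l) \<le> y b)))"

definition weak_conv :: "'i set \<Rightarrow> ('i \<Rightarrow> 'i \<Rightarrow> bool) \<Rightarrow> ('i \<Rightarrow> 'a::real_normed_vector) \<Rightarrow> 'a \<Rightarrow> bool" where
  "weak_conv I r x l \<longleftrightarrow>
     (\<forall>f::'a \<Rightarrow> real. bounded_linear f \<longrightarrow>
        (\<forall>\<epsilon>>0. net_eventually I r (\<lambda>a. \<bar>f (x a) - f l\<bar> < \<epsilon>)))"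

definition mw_conv :: "'i set \<Rightarrow> ('i \<Rightarrow> 'i \<Rightarrow> bool) \<Rightarrow>
    ('i \<Rightarrow> 'a::{real_normed_algebra, lattice, ordered_real_vector}) \<Rightarrow> 'a \<Rightarrow> bool" where
  "mw_conv I r x l \<longleftrightarrow> (\<forall>u::'a. 0 \<le> u \<longrightarrow> weak_conv I r (\<lambda>a. lat_abs (x a - l) * u) 0)"

definition mw_continuous ::
  "'a::{real_normed_algebra, lattice, ordered_real_vector} itself \<Rightarrow> 'i itself \<Rightarrow> bool" where
  "mw_continuous _ _ \<longleftrightarrow>
     (\<forall>(I::'i set) r (x::'i \<Rightarrow> 'a). directed_on I r \<longrightarrow> order_conv I r x 0 \<longrightarrow> mw_conv I r x 0)"

end

theory Submission
  imports Defs
begin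

text \<open>For a bounded linear functional \<open>f\<close> on a vector lattice with a lattice norm, the
  Riesz--Kantorovich formula \<open>f\<^sup>+ w = sup {f v | 0 \<le> v \<le> w}\<close> is additive and positively
  homogeneous on the positive cone, so it extends to a bounded linear functional; both \<open>f\<^sup>+\<close>
  and \<open>f\<^sup>- = f\<^sup>+ - f\<close> are positive, whence \<open>|f v| \<le> f\<^sup>+ w + f\<^sup>- w\<close> for
  \<open>0 \<le> v \<le> w\<close>.  Hence a net squeezed between 0 and a weakly null net is weakly null.
  A decreasing net with infimum 0 order converges to 0, which gives one implication.
  Conversely, if \<open>|x\<^sub>\<alpha>| \<le> y\<^sub>\<beta>\<close> eventually with \<open>y\<^sub>\<beta> \<down> 0\<close>, then
  \<open>0 \<le> |x\<^sub>\<alpha>| u \<le> y\<^sub>\<beta> u\<close> by positivity of products, and \<open>y\<^sub>\<beta> u \<rightarrow> 0\<close> weakly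
  by hypothesis.\<close>

lemma lat_abs_ge: "x \<le> lat_abs (x::'a::{lattice,ordered_ab_group_add})" "- x \<le> lat_abs x"
  unfolding lat_abs_def by auto

lemma lat_abs_of_nonneg: "0 \<le> (x::'a::{lattice,ordered_ab_group_add}) \<Longrightarrow> lat_abs x = x"
  unfolding lat_abs_def by (metis neg_le_0_iff_le order_trans sup.absorb1)

lemma lat_abs_nonneg: "0 \<le> lat_abs (x::'a::{lattice,ordered_real_vector})"
proof -
  have "0 \<le> lat_abs x + lat_abs x"
    using add_mono[OF lat_abs_ge] by (metis add.right_inverse)
  then have "0 \<le> (1/2::real) *\<^sub>R (lat_abs x + lat_abs x)"
    by (intro scaleR_nonneg_nonneg) auto
  then show ?thesis by (simp add: scaleR_2[symmetric])
qed

lemma add_lat_abs_nonneg: "0 \<le> x + lat_abs (x::'a::{lattice,ordered_ab_group_add})"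
  using add_left_mono[OF lat_abs_ge(2), of x x] by simp

text \<open>\<open>pos_part_cone f w\<close> is \<open>f\<^sup>+ w\<close>, meaningful only for \<open>0 \<le> w\<close> (otherwise the set may
  be empty); \<open>pos_part f\<close> extends it to all of E through \<open>x = (x + |x|) - |x|\<close>.\<close>
definition pos_part_cone :: "('a::{real_normed_vector, lattice, ordered_real_vector} \<Rightarrow> real) \<Rightarrow> 'a \<Rightarrow> real"
  where "pos_part_cone f w = Sup (f ` {v. 0 \<le> v \<and> v \<le> w})"

definition pos_part :: "('a::{real_normed_vector, lattice, ordered_real_vector} \<Rightarrow> real) \<Rightarrow> 'a \<Rightarrow> real"
  where "pos_part f x = pos_part_cone f (x + lat_abs x) - pos_part_cone f (lat_abs x)"

context
  fixes f :: "'a::{real_normed_vector, lattice, ordered_real_vector} \<Rightarrow> real"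
  assumes f: "bounded_linear f"
    and lattice_norm: "\<And>x y::'a. lat_abs x \<le> lat_abs y \<Longrightarrow> norm x \<le> norm y"
begin

interpretation f: bounded_linear f by (fact f)

lemma norm_mono_nonneg: "0 \<le> (v::'a) \<Longrightarrow> v \<le> w \<Longrightarrow> norm v \<le> norm w"
  by (rule lattice_norm) (simp add: lat_abs_of_nonneg)

lemma norm_lat_abs: "norm (lat_abs (x::'a)) \<le> norm x"
  by (rule lattice_norm) (simp add: lat_abs_of_nonneg lat_abs_nonneg)

lemma order_interval_bound: "\<exists>K\<ge>0. \<forall>v w. 0 \<le> v \<and> v \<le> w \<longrightarrow> f v \<le> norm w * K"
proof -
  obtain K where K: "K > 0" "\<And>x. norm (f x) \<le> norm x * K"
    using bounded_linear.pos_bounded[OF f] by blast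
  have "f v \<le> norm w * K" if "0 \<le> v" "v \<le> w" for v w
  proof -
    have "f v \<le> norm (f v)" by simp
    also have "\<dots> \<le> norm v * K" by (rule K(2))
    also have "\<dots> \<le> norm w * K"
      using norm_mono_nonneg[OF that] K(1) by (simp add: mult_right_mono)
    finally show ?thesis .
  qed
  with K(1) show ?thesis by (intro exI[of _ K]) auto
qed

lemma pos_part_cone_upper:
  assumes "0 \<le> v" "v \<le> w"
  shows "f v \<le> pos_part_cone f w"
proof -
  from order_interval_bound obtain K where "\<forall>v w. 0 \<le> v \<and> v \<le> w \<longrightarrow> f v \<le> norm w * K"
    by blast
  then have "bdd_above (f ` {v. 0 \<le> v \<and> v \<le> w})"
    by (intro bdd_aboveI2[where M = "norm w * K"]) simp
  then show ?thesis
    unfolding pos_part_cone_def using assms by (intro cSup_upper) simp_all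
qed

lemma pos_part_cone_least:
  "0 \<le> w \<Longrightarrow> (\<And>v. 0 \<le> v \<Longrightarrow> v \<le> w \<Longrightarrow> f v \<le> B) \<Longrightarrow> pos_part_cone f w \<le> B"
  unfolding pos_part_cone_def by (rule cSup_least) auto

lemma pos_part_cone_ge: "0 \<le> w \<Longrightarrow> f w \<le> pos_part_cone f w"
  using pos_part_cone_upper[of w w] by simp

lemma pos_part_cone_nonneg: "0 \<le> w \<Longrightarrow> 0 \<le> pos_part_cone f w"
  using pos_part_cone_upper[of 0 w] f.zero by simp

lemma pos_part_cone_zero: "pos_part_cone f 0 = 0"
  using pos_part_cone_least[of 0 0] pos_part_cone_nonneg[of 0]
  by (auto simp: f.zero dest: antisym)

lemma pos_part_cone_le_norm: "\<exists>K\<ge>0. \<forall>w. 0 \<le> w \<longrightarrow> pos_part_cone f w \<le> norm w * K"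
proof -
  from order_interval_bound obtain K where "K \<ge> 0" and K: "\<forall>v w. 0 \<le> v \<and> v \<le> w \<longrightarrow> f v \<le> norm w * K"
    by blast
  have "pos_part_cone f w \<le> norm w * K" if "0 \<le> w" for w
    using that K by (intro pos_part_cone_least) simp_all
  with \<open>K \<ge> 0\<close> show ?thesis by blast
qed

text \<open>Subadditivity uses the Riesz decomposition \<open>z = (z \<sqinter> w\<^sub>1) + (z - z \<sqinter> w\<^sub>1)\<close>
  of \<open>0 \<le> z \<le> w\<^sub>1 + w\<^sub>2\<close>.\<close>
lemma pos_part_cone_add:
  assumes w1: "0 \<le> w1" and w2: "0 \<le> w2"
  shows "pos_part_cone f (w1 + w2) = pos_part_cone f w1 + pos_part_cone f w2"
proof (rule antisym)
  show "pos_part_cone f (w1 + w2) \<le> pos_part_cone f w1 + pos_part_cone f w2"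
  proof (rule pos_part_cone_least)
    show "0 \<le> w1 + w2" using w1 w2 by simp
    fix z assume z: "0 \<le> z" "z \<le> w1 + w2"
    have "z - w2 \<le> inf z w1"
      using z(2) w2 by (intro le_infI) (simp_all add: algebra_simps)
    then have "z - inf z w1 \<le> w2"
      by (metis add.commute diff_le_eq)
    moreover have "0 \<le> z - inf z w1"
      by simp
    moreover have "0 \<le> inf z w1" "inf z w1 \<le> w1"
      using z w1 by auto
    ultimately have "f (inf z w1) + f (z - inf z w1) \<le> pos_part_cone f w1 + pos_part_cone f w2"
      by (intro add_mono pos_part_cone_upper)
    then show "f z \<le> pos_part_cone f w1 + pos_part_cone f w2"
      by (simp add: f.add[symmetric])
  qed
  have "pos_part_cone f w1 \<le> pos_part_cone f (w1 + w2) - pos_part_cone f w2"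
  proof (rule pos_part_cone_least[OF w1])
    fix v1 assume v1: "0 \<le> v1" "v1 \<le> w1"
    have "pos_part_cone f w2 \<le> pos_part_cone f (w1 + w2) - f v1"
    proof (rule pos_part_cone_least[OF w2])
      fix v2 assume v2: "0 \<le> v2" "v2 \<le> w2"
      have "f (v1 + v2) \<le> pos_part_cone f (w1 + w2)"
        using v1 v2 by (intro pos_part_cone_upper add_nonneg_nonneg add_mono)
      then show "f v2 \<le> pos_part_cone f (w1 + w2) - f v1"
        using f.add[of v1 v2] by linarith
    qed
    then show "f v1 \<le> pos_part_cone f (w1 + w2) - pos_part_cone f w2" by linarith
  qed
  then show "pos_part_cone f w1 + pos_part_cone f w2 \<le> pos_part_cone f (w1 + w2)" by linarith
qed

lemma pos_part_cone_scaleR_le: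
  assumes "0 \<le> w" "0 < c"
  shows "pos_part_cone f (c *\<^sub>R w) \<le> c * pos_part_cone f w"
proof (rule pos_part_cone_least)
  show "0 \<le> c *\<^sub>R w" using assms by (simp add: scaleR_nonneg_nonneg)
  fix v assume v: "0 \<le> v" "v \<le> c *\<^sub>R w"
  have "0 \<le> (1/c) *\<^sub>R v" "(1/c) *\<^sub>R v \<le> w"
    using v assms scaleR_left_mono[OF v(2), of "1/c"] by (auto simp: scaleR_nonneg_nonneg)
  then have "c * f ((1/c) *\<^sub>R v) \<le> c * pos_part_cone f w"
    using assms(2) by (intro mult_left_mono pos_part_cone_upper) auto
  moreover have "c * f ((1/c) *\<^sub>R v) = f v"
    using assms(2) by (simp add: f.scaleR)
  ultimately show "f v \<le> c * pos_part_cone f w" by simp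
qed

lemma pos_part_cone_scaleR:
  assumes w: "0 \<le> w" and c: "0 \<le> c"
  shows "pos_part_cone f (c *\<^sub>R w) = c * pos_part_cone f w"
proof (cases "c = 0")
  case True
  then show ?thesis by (simp add: pos_part_cone_zero)
next
  case False
  with c have c: "0 < c" by simp
  have "pos_part_cone f ((1/c) *\<^sub>R (c *\<^sub>R w)) \<le> (1/c) * pos_part_cone f (c *\<^sub>R w)"
    using w c by (intro pos_part_cone_scaleR_le) (auto simp: scaleR_nonneg_nonneg)
  then have "c * pos_part_cone f w \<le> pos_part_cone f (c *\<^sub>R w)"
    using c by (simp add: divide_simps mult.commute)
  with pos_part_cone_scaleR_le[OF w c] show ?thesis
    by (rule antisym)
qed

lemma pos_part_eq_diff:
  assumes t: "0 \<le> t" and xt: "0 \<le> x + t"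
  shows "pos_part f x = pos_part_cone f (x + t) - pos_part_cone f t"
proof -
  have "pos_part_cone f (x + t) + pos_part_cone f (lat_abs x)
      = pos_part_cone f ((x + lat_abs x) + t)"
    using pos_part_cone_add[OF xt lat_abs_nonneg] by (simp add: algebra_simps)
  also have "\<dots> = pos_part_cone f (x + lat_abs x) + pos_part_cone f t"
    using pos_part_cone_add[OF add_lat_abs_nonneg t] .
  finally show ?thesis unfolding pos_part_def by simp
qed

lemma pos_part_of_nonneg: "0 \<le> w \<Longrightarrow> pos_part f w = pos_part_cone f w"
  using pos_part_eq_diff[of 0 w] by (simp add: pos_part_cone_zero)

lemma pos_part_add: "pos_part f (x + y) = pos_part f x + pos_part f y"
proof -
  have split: "x + y + (lat_abs x + lat_abs y) = (x + lat_abs x) + (y + lat_abs y)"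
    by (simp add: algebra_simps)
  have "0 \<le> lat_abs x + lat_abs y"
    by (intro add_nonneg_nonneg lat_abs_nonneg)
  moreover have "0 \<le> x + y + (lat_abs x + lat_abs y)"
    unfolding split by (intro add_nonneg_nonneg add_lat_abs_nonneg)
  ultimately have "pos_part f (x + y)
      = pos_part_cone f ((x + lat_abs x) + (y + lat_abs y)) - pos_part_cone f (lat_abs x + lat_abs y)"
    unfolding split[symmetric] by (rule pos_part_eq_diff)
  also have "\<dots> = pos_part f x + pos_part f y"
    unfolding pos_part_def
    using pos_part_cone_add[OF add_lat_abs_nonneg add_lat_abs_nonneg, of x y]
      pos_part_cone_add[OF lat_abs_nonneg lat_abs_nonneg, of x y]
    by linarith
  finally show ?thesis .
qed

lemma pos_part_scaleR_nonneg:
  assumes c: "0 \<le> c"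
  shows "pos_part f (c *\<^sub>R x) = c * pos_part f x"
proof -
  have "0 \<le> c *\<^sub>R lat_abs x" "0 \<le> c *\<^sub>R x + c *\<^sub>R lat_abs x"
    using c lat_abs_nonneg[of x] add_lat_abs_nonneg[of x]
    by (auto simp: scaleR_right_distrib[symmetric] intro: scaleR_nonneg_nonneg)
  then have "pos_part f (c *\<^sub>R x)
      = pos_part_cone f (c *\<^sub>R (x + lat_abs x)) - pos_part_cone f (c *\<^sub>R lat_abs x)"
    by (simp add: pos_part_eq_diff scaleR_right_distrib)
  then show ?thesis
    unfolding pos_part_def
    using pos_part_cone_scaleR[OF add_lat_abs_nonneg c] pos_part_cone_scaleR[OF lat_abs_nonneg c]
    by (simp add: right_diff_distrib)
qed

lemma pos_part_scaleR: "pos_part f (c *\<^sub>R x) = c * pos_part f x"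
proof (cases "0 \<le> c")
  case True
  then show ?thesis by (rule pos_part_scaleR_nonneg)
next
  case False
  have "pos_part f (- x) = - pos_part f x"
    using pos_part_add[of x "- x"] by (simp add: pos_part_def)
  moreover have "pos_part f (c *\<^sub>R x) = (- c) * pos_part f (- x)"
    using False pos_part_scaleR_nonneg[of "- c" "- x"] by simp
  ultimately show ?thesis by (simp add: algebra_simps)
qed

lemma bounded_linear_pos_part: "bounded_linear (pos_part f)"
proof -
  from pos_part_cone_le_norm obtain K
    where K: "K \<ge> 0" "\<And>w. 0 \<le> w \<Longrightarrow> pos_part_cone f w \<le> norm w * K"
    by blast
  have "norm (pos_part f x) \<le> norm x * (2 * K)" for x
  proof -
    have "norm (x + lat_abs x) \<le> 2 * norm x"
      using norm_triangle_ineq[of x "lat_abs x"] norm_lat_abs[of x] by simp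
    then have "pos_part_cone f (x + lat_abs x) \<le> 2 * norm x * K"
      using K(2)[OF add_lat_abs_nonneg] mult_right_mono[OF _ K(1)] by (meson order_trans)
    moreover have "pos_part_cone f (lat_abs x) \<le> 2 * norm x * K"
      using K(2)[OF lat_abs_nonneg, of x] mult_right_mono[OF _ K(1), of "norm (lat_abs x)" "2 * norm x"]
        norm_lat_abs[of x] norm_ge_zero[of x] by linarith
    ultimately show ?thesis
      unfolding pos_part_def
      using pos_part_cone_nonneg[OF add_lat_abs_nonneg, of x] pos_part_cone_nonneg[OF lat_abs_nonneg, of x]
      by (simp add: abs_le_iff algebra_simps)
  qed
  then show ?thesis
    by (intro bounded_linear_intro[where K = "2 * K"]) (simp_all add: pos_part_add pos_part_scaleR)
qed

lemma abs_le_pos_neg_part: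
  assumes v: "0 \<le> v" "v \<le> w"
  shows "\<bar>f v\<bar> \<le> \<bar>pos_part f w\<bar> + \<bar>pos_part f w - f w\<bar>"
proof -
  have w: "0 \<le> w" and wv: "0 \<le> w - v" using v by auto
  have "f v \<le> pos_part f w"
    using pos_part_cone_upper[OF v] pos_part_of_nonneg[OF w] by simp
  moreover have "- f v \<le> pos_part f w - f w"
    using pos_part_cone_add[OF v(1) wv] pos_part_cone_nonneg[OF v(1)]
      pos_part_cone_ge[OF wv] pos_part_of_nonneg[OF w] f.diff[of w v]
    by simp
  ultimately show ?thesis by linarith
qed

end

lemma weak_convD:
  fixes g :: "'a::real_normed_vector \<Rightarrow> real"
  shows "weak_conv I r x l \<Longrightarrow> bounded_linear g \<Longrightarrow> 0 < e \<Longrightarrow>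
    net_eventually I r (\<lambda>a. \<bar>g (x a) - g l\<bar> < e)"
  unfolding weak_conv_def by blast

lemma weak_conv_cong:
  "(\<And>a. a \<in> I \<Longrightarrow> x a = x' a) \<Longrightarrow> weak_conv I r x l \<longleftrightarrow> weak_conv I r x' l"
  unfolding weak_conv_def net_eventually_def by auto

lemma weak_conv_squeeze:
  fixes v :: "'i \<Rightarrow> 'a::{real_normed_vector, lattice, ordered_real_vector}" and w :: "'j \<Rightarrow> 'a"
  assumes lattice_norm: "\<And>x y::'a. lat_abs x \<le> lat_abs y \<Longrightarrow> norm x \<le> norm y"
    and J: "directed_on J s" and w: "weak_conv J s w 0"
    and squeeze: "\<forall>b\<in>J. net_eventually I r (\<lambda>a. 0 \<le> v a \<and> v a \<le> w b)"
  shows "weak_conv I r v 0"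
  unfolding weak_conv_def
proof (intro allI impI)
  fix f :: "'a \<Rightarrow> real" and e :: real
  assume f: "bounded_linear f" and e: "0 < e"
  let ?g = "pos_part f" and ?h = "\<lambda>z. pos_part f z - f z"
  have g: "bounded_linear ?g" and h: "bounded_linear ?h"
    using bounded_linear_pos_part[OF f lattice_norm] bounded_linear_sub[OF _ f] by blast+
  have "net_eventually J s (\<lambda>b. \<bar>?g (w b) - ?g 0\<bar> < e / 2)"
    "net_eventually J s (\<lambda>b. \<bar>?h (w b) - ?h 0\<bar> < e / 2)"
    using e by (intro weak_convD[OF w g] weak_convD[OF w h]; simp)+
  then obtain b1 b2 where b1: "b1 \<in> J" "\<forall>b\<in>J. s b1 b \<longrightarrow> \<bar>?g (w b)\<bar> < e / 2"
    and b2: "b2 \<in> J" "\<forall>b\<in>J. s b2 b \<longrightarrow> \<bar>?h (w b)\<bar> < e / 2"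
    unfolding net_eventually_def by (auto simp: linear_simps(3)[OF f] linear_simps(3)[OF g])
  obtain c where c: "c \<in> J" "s b1 c" "s b2 c"
    using J b1(1) b2(1) unfolding directed_on_def by blast
  obtain a0 where "a0 \<in> I" "\<forall>a\<in>I. r a0 a \<longrightarrow> 0 \<le> v a \<and> v a \<le> w c"
    using squeeze c(1) unfolding net_eventually_def by blast
  moreover have "\<bar>f (v a)\<bar> < e" if "0 \<le> v a" "v a \<le> w c" for a
    using abs_le_pos_neg_part[OF f lattice_norm that] b1(2) b2(2) c by fastforce
  ultimately show "net_eventually I r (\<lambda>a. \<bar>f (v a) - f 0\<bar> < e)"
    unfolding net_eventually_def by (auto simp: linear_simps(3)[OF f])
qed

lemma order_conv_of_decr_to_zero:
  fixes x :: "'i \<Rightarrow> 'a::{lattice, ordered_ab_group_add}"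
  assumes I: "directed_on I r" and x: "net_decr_to_zero I r x"
  shows "order_conv I r x 0"
proof -
  have "net_eventually I r (\<lambda>a. lat_abs (x a - 0) \<le> x b)" if "b \<in> I" for b
    using that x unfolding net_eventually_def net_decr_to_zero_def
    by (intro bexI[OF _ that]) (auto simp: lat_abs_of_nonneg)
  with I x show ?thesis
    unfolding order_conv_def by blast
qed

context
  assumes E: "banach_f_algebra TYPE('a::{real_normed_algebra, banach, lattice, ordered_real_vector})"
begin

lemma f_algebra_norm_mono: "lat_abs x \<le> lat_abs y \<Longrightarrow> norm x \<le> norm (y::'a)"
  using E unfolding banach_f_algebra_def by blast

lemma f_algebra_mult_nonneg: "0 \<le> x \<Longrightarrow> 0 \<le> y \<Longrightarrow> 0 \<le> x * (y::'a)"
  using E unfolding banach_f_algebra_def by blast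

lemma f_algebra_mult_right_mono: "a \<le> b \<Longrightarrow> 0 \<le> u \<Longrightarrow> a * u \<le> b * (u::'a)"
  using f_algebra_mult_nonneg[of "b - a" u] by (simp add: left_diff_distrib)

lemma mw_conv_of_dominated:
  fixes x :: "'i \<Rightarrow> 'a" and y :: "'j \<Rightarrow> 'a"
  assumes J: "directed_on J s" and y_nonneg: "\<forall>b\<in>J. 0 \<le> y b" and y: "mw_conv J s y 0"
    and dom: "\<forall>b\<in>J. net_eventually I r (\<lambda>a. lat_abs (x a) \<le> y b)"
  shows "mw_conv I r x 0"
  unfolding mw_conv_def
proof (intro allI impI)
  fix u :: 'a assume u: "0 \<le> u"
  have "weak_conv J s (\<lambda>b. lat_abs (y b - 0) * u) 0"
    using y u unfolding mw_conv_def by blast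
  moreover have "weak_conv J s (\<lambda>b. lat_abs (y b - 0) * u) 0 \<longleftrightarrow> weak_conv J s (\<lambda>b. y b * u) 0"
    using y_nonneg by (intro weak_conv_cong) (simp add: lat_abs_of_nonneg)
  moreover have "\<forall>b\<in>J. net_eventually I r (\<lambda>a. 0 \<le> lat_abs (x a) * u \<and> lat_abs (x a) * u \<le> y b * u)"
    using dom u lat_abs_nonneg f_algebra_mult_nonneg f_algebra_mult_right_mono
    unfolding net_eventually_def by meson
  ultimately show "weak_conv I r (\<lambda>a. lat_abs (x a - 0) * u) 0"
    using weak_conv_squeeze[OF f_algebra_norm_mono J] by simp
qed

end

theorem lemma2p16:
  assumes "banach_f_algebra TYPE('a::{real_normed_algebra, banach, lattice, ordered_real_vector})"
  shows "mw_continuous TYPE('a) TYPE('i) \<longleftrightarrow>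
    (\<forall>(I::'i set) r (x::'i \<Rightarrow> 'a). directed_on I r \<longrightarrow> net_decr_to_zero I r x \<longrightarrow> mw_conv I r x 0)"
proof
  assume "mw_continuous TYPE('a) TYPE('i)"
  then show "\<forall>(I::'i set) r (x::'i \<Rightarrow> 'a). directed_on I r \<longrightarrow> net_decr_to_zero I r x \<longrightarrow> mw_conv I r x 0"
    unfolding mw_continuous_def using order_conv_of_decr_to_zero by blast
next
  assume decr: "\<forall>(I::'i set) r (x::'i \<Rightarrow> 'a). directed_on I r \<longrightarrow> net_decr_to_zero I r x \<longrightarrow> mw_conv I r x 0"
  show "mw_continuous TYPE('a) TYPE('i)"
    unfolding mw_continuous_def
  proof (intro allI impI)
    fix I :: "'i set" and r and x :: "'i \<Rightarrow> 'a"
    assume "order_conv I r x 0"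
    then obtain J :: "'i set" and s y where J: "directed_on J s" "net_decr_to_zero J s y"
      and dom: "\<forall>b\<in>J. net_eventually I r (\<lambda>a. lat_abs (x a) \<le> y b)"
      unfolding order_conv_def by auto
    moreover have "mw_conv J s y 0"
      using decr J by blast
    ultimately show "mw_conv I r x 0"
      using mw_conv_of_dominated[OF assms] unfolding net_decr_to_zero_def by blast
  qed
qed

end
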